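(* Let $s$ be a positive integer, $S$ a linear subspace of $\mathbb{R}^s$, $b\in\mathbb{R}^s_{>0}$, and $z\in S+b$ with $z\in\mathbb{R}^s_{\ge0}$. Let $\alpha\in\{0,1\}^s$ be given by $\alpha_i=1$ if $z_i>0$ and $\alpha_i=0$ otherwise. Then $(\alpha+S)\cap\mathbb{R}^s_{\ge0}$ intersects $\mathbb{R}^s_{>0}$. *)

theory Defs
  imports "HOL-Analysis.Analysis"
begin

end

theory Submission
  imports Defs
begin

text \<open>Write \<open>z = v + b\<close> with \<open>v \<in> S\<close> and scale \<open>-v = b - z\<close> by a small \<open>t > 0\<close> with
  \<open>t z\<^sub>i < 1\<close>. Then \<open>\<alpha> - t v = (\<alpha> - t z) + t b\<close>: the first summand is nonnegative, since it
  vanishes where \<open>z\<^sub>i = 0\<close> and equals \<open>1 - t z\<^sub>i > 0\<close> elsewhere, and the second is positive.\<close>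

lemma exists_pos_scale_components_less_one:
  fixes z :: "real ^ 'n"
  obtains t where "t > 0" "\<And>i. t * z $ i < 1"
proof
  define s where "s = (\<Sum>i\<in>UNIV. \<bar>z $ i\<bar>)"
  have s_nonneg: "s \<ge> 0"
    unfolding s_def by (simp add: sum_nonneg)
  show "1 / (1 + s) > 0"
    using s_nonneg by simp
  fix i
  have "z $ i \<le> \<bar>z $ i\<bar>" by simp
  also have "\<dots> \<le> s"
    unfolding s_def by (rule member_le_sum) auto
  finally have "z $ i \<le> s" .
  then have "z $ i < 1 + s" by simp
  then show "1 / (1 + s) * z $ i < 1"
    using s_nonneg by (simp add: field_simps)
qed

theorem lemma4p5:
  fixes S :: "(real ^ 'n) set" and b z :: "real ^ 'n"
  assumes "subspace S"
    and "\<forall>i. 0 < b $ i"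
    and "z \<in> (\<lambda>v. v + b) ` S"
    and "\<forall>i. 0 \<le> z $ i"
  defines "\<alpha> \<equiv> (\<chi> i. if 0 < z $ i then (1::real) else 0)"
  shows "((\<lambda>v. \<alpha> + v) ` S) \<inter> {x. \<forall>i. 0 \<le> x $ i} \<inter> {x. \<forall>i. 0 < x $ i} \<noteq> {}"
proof -
  obtain v where v: "v \<in> S" "z = v + b"
    using assms(3) by auto
  obtain t where t: "t > 0" "\<And>i. t * z $ i < 1"
    using exists_pos_scale_components_less_one[of z] by blast
  have in_S: "(- t) *\<^sub>R v \<in> S"
    using v(1) assms(1) by (simp add: subspace_scale subspace_neg)
  have "0 < (\<alpha> + (- t) *\<^sub>R v) $ i" for i
  proof -
    have "0 \<le> \<alpha> $ i - t * z $ i"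
    proof (cases "0 < z $ i")
      case False
      then have "z $ i = 0" using assms(4) by (simp add: eq_iff not_less)
      then show ?thesis unfolding \<alpha>_def by simp
    qed (use t(2)[of i] in \<open>simp add: \<alpha>_def\<close>)
    moreover have "0 < t * b $ i"
      using t(1) assms(2) by simp
    moreover have "(\<alpha> + (- t) *\<^sub>R v) $ i = (\<alpha> $ i - t * z $ i) + t * b $ i"
      using v(2) by (simp add: algebra_simps)
    ultimately show ?thesis by linarith
  qed
  then have "\<alpha> + (- t) *\<^sub>R v \<in> ((\<lambda>v. \<alpha> + v) ` S) \<inter> {x. \<forall>i. 0 \<le> x $ i} \<inter> {x. \<forall>i. 0 < x $ i}"
    using in_S less_imp_le by blast
  then show ?thesis by blast
qed

end
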